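(* Let $X_1,\dots,X_k$ be finite-dimensional subspaces of a vector space $V$ over a field $\mathbb{F}$, and let $r\ge 0$ be an integer such that $\lambda^*(X_1,\dots,X_k)\le r$. Then there exists a subspace $A$ of $V$ with $\dim A\le 3r$ such that \[\sum_{i=1}^k\big(\dim X_i-\dim(X_i\cap A)\big)\le \dim\Big(\sum_{i=1}^k X_i\Big).\]
   Context: For subspaces $X_1,\dots,X_k$ of a vector space, $\sum_{i\in I}X_i$ denotes the smallest subspace containing all $X_i$, $i\in I$ (the zero subspace if $I=\emptyset$), and \[\lambda^*(X_1,\dots,X_k)=\max_{I\subseteq[k]}\Big(\dim\sum_{i\in I}X_i+\dim\sum_{i\in[k]\setminus I}X_i-\dim(X_1+\dots+X_k)\Big).\] (In the paper the quantity $\dim X_i-\dim(X_i\cap A)$ is written $\dim(X_i/A)$.) *)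

theory Defs
  imports Complex_Main
begin

text \<open>Vector space: the whole type 'b with scalar multiplication scale over the field 'a.
  A subspace X is finite-dimensional if it is the span of a finite set.\<close>

definition fin_dim_subspace :: "('a::field \<Rightarrow> 'b::ab_group_add \<Rightarrow> 'b) \<Rightarrow> 'b set \<Rightarrow> bool" where
  "fin_dim_subspace scale X \<longleftrightarrow> module.subspace scale X \<and> (\<exists>B. finite B \<and> module.span scale B = X)"

definition subspace_sum :: "('a::field \<Rightarrow> 'b::ab_group_add \<Rightarrow> 'b) \<Rightarrow> (nat \<Rightarrow> 'b set) \<Rightarrow> nat set \<Rightarrow> 'b set" where
  "subspace_sum scale X I = module.span scale (\<Union>i\<in>I. X i)"

definition lambda_star :: "('a::field \<Rightarrow> 'b::ab_group_add \<Rightarrow> 'b) \<Rightarrow> (nat \<Rightarrow> 'b set) \<Rightarrow> nat \<Rightarrow> int" where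
  "lambda_star scale X k = Max {int (vector_space.dim scale (subspace_sum scale X I))
      + int (vector_space.dim scale (subspace_sum scale X ({1..k} - I)))
      - int (vector_space.dim scale (subspace_sum scale X {1..k})) | I. I \<subseteq> {1..k}}"

end

theory Submission
  imports Defs
begin

text \<open>The subspaces are added one at a time. After \<open>X\<^sub>1, \<dots>, X\<^sub>m\<close> we keep a split
  \<open>[m] = I \<union> J\<close> and a subspace \<open>A\<close> containing \<open>W = S\<^sub>I \<inter> S\<^sub>J\<close> with \<open>dim A \<le> 3 dim W\<close> for
  which the inequality already holds. The new subspace \<open>Y\<close> meets \<open>S = S\<^sub>I + S\<^sub>J\<close> in \<open>U\<close>.
  Putting \<open>Y\<close> on the side \<open>J\<close> (resp. \<open>I\<close>) enlarges \<open>W\<close> by \<open>dim U - dim (U \<inter> S\<^sub>J)\<close>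
  (resp. \<open>dim U - dim (U \<inter> S\<^sub>I)\<close>), and as \<open>dim (U \<inter> S\<^sub>I) + dim (U \<inter> S\<^sub>J) \<le> dim U + dim (U \<inter> W)\<close>
  the better side gives a meet \<open>W'\<close> with \<open>2 dim W' \<ge> 2 dim W + dim U - dim (U \<inter> W)\<close>. Then
  \<open>A' = A + U + W'\<close> satisfies \<open>dim A' \<le> 3 dim W'\<close> and contains \<open>Y \<inter> S\<close>, which pays for the
  new term of the sum. Finally \<open>dim W\<close> is one of the quantities maximised in \<open>\<lambda>\<^sup>*\<close>,
  by Grassmann's formula.\<close>

definition split_meet ::
    "('a::field \<Rightarrow> 'b::ab_group_add \<Rightarrow> 'b) \<Rightarrow> (nat \<Rightarrow> 'b set) \<Rightarrow> nat set \<Rightarrow> nat set \<Rightarrow> 'b set"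
  where "split_meet scale X K I = subspace_sum scale X I \<inter> subspace_sum scale X (K - I)"

definition balanced_cover ::
    "('a::field \<Rightarrow> 'b::ab_group_add \<Rightarrow> 'b) \<Rightarrow> (nat \<Rightarrow> 'b set) \<Rightarrow> nat \<Rightarrow> nat set \<Rightarrow> 'b set \<Rightarrow> bool"
  where "balanced_cover scale X m I A \<longleftrightarrow>
    I \<subseteq> {1..m} \<and> module.subspace scale A \<and> A \<subseteq> subspace_sum scale X {1..m}
    \<and> split_meet scale X {1..m} I \<subseteq> A
    \<and> vector_space.dim scale A \<le> 3 * vector_space.dim scale (split_meet scale X {1..m} I)
    \<and> (\<Sum>i=1..m. vector_space.dim scale (X i) - vector_space.dim scale (X i \<inter> A))
        \<le> vector_space.dim scale (subspace_sum scale X {1..m})"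

context vector_space
begin

lemma span_Un_span_left: "span (span S \<union> T) = span (S \<union> T)"
  unfolding span_def by (rule hull_Un_left[symmetric])

lemma span_Un_span_right: "span (S \<union> span T) = span (S \<union> T)"
  unfolding span_def by (rule hull_Un_right[symmetric])

lemma subspace_subspace_sum [simp]: "subspace (subspace_sum scale X K)"
  unfolding subspace_sum_def by simp

lemma subspace_sum_upper: "i \<in> K \<Longrightarrow> X i \<subseteq> subspace_sum scale X K"
  unfolding subspace_sum_def using span_superset by blast

lemma subspace_sum_mono: "K \<subseteq> L \<Longrightarrow> subspace_sum scale X K \<subseteq> subspace_sum scale X L"
  unfolding subspace_sum_def by (intro span_mono) auto

lemma subspace_sum_Un:
  "subspace_sum scale X (K \<union> L) = span (subspace_sum scale X K \<union> subspace_sum scale X L)"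
  unfolding subspace_sum_def by (simp add: span_Un_span_left span_Un_span_right UN_Un)

lemma subspace_sum_insert:
  "subspace_sum scale X (insert a K) = span (X a \<union> subspace_sum scale X K)"
  unfolding subspace_sum_def by (simp add: span_Un_span_right)

lemma subspace_sum_subset_span:
  "(\<And>i. i \<in> K \<Longrightarrow> X i \<subseteq> span F) \<Longrightarrow> subspace_sum scale X K \<subseteq> span F"
  unfolding subspace_sum_def by (intro span_minimal) auto

lemma finite_common_span:
  assumes "finite K" "\<forall>i\<in>K. fin_dim_subspace scale (X i)"
  obtains F where "finite F" "\<forall>i\<in>K. X i \<subseteq> span F"
proof -
  obtain B where B: "\<forall>i\<in>K. finite (B i) \<and> span (B i) = X i"
    using bchoice[of K "\<lambda>i B. finite B \<and> span B = X i"] assms(2)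
    unfolding fin_dim_subspace_def by blast
  have "X i \<subseteq> span (\<Union>(B ` K))" if "i \<in> K" for i
    using B that span_mono[of "B i" "\<Union>(B ` K)"] by auto
  then show ?thesis
    using that B assms(1) by blast
qed

lemma split_meet_Suc:
  assumes "I \<subseteq> {1..m}"
  shows "split_meet scale X {1..Suc m} I
      = subspace_sum scale X I \<inter> span (X (Suc m) \<union> subspace_sum scale X ({1..m} - I))"
    and "split_meet scale X {1..Suc m} (insert (Suc m) I)
      = span (X (Suc m) \<union> subspace_sum scale X I) \<inter> subspace_sum scale X ({1..m} - I)"
proof -
  have "{1..Suc m} - I = insert (Suc m) ({1..m} - I)" "{1..Suc m} - insert (Suc m) I = {1..m} - I"
    using assms by auto
  then show "split_meet scale X {1..Suc m} I
      = subspace_sum scale X I \<inter> span (X (Suc m) \<union> subspace_sum scale X ({1..m} - I))"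
    and "split_meet scale X {1..Suc m} (insert (Suc m) I)
      = span (X (Suc m) \<union> subspace_sum scale X I) \<inter> subspace_sum scale X ({1..m} - I)"
    unfolding split_meet_def by (simp_all add: subspace_sum_insert)
qed

text \<open>The ambient space may be infinite-dimensional; finite-dimensionality is replaced by lying
  in the span of the finite set \<open>F\<close>.\<close>

context
  fixes F :: "'b set"
  assumes finite_F: "finite F"
begin

lemma finite_basis_exists:
  assumes "V \<subseteq> span F"
  obtains B where "B \<subseteq> V" "independent B" "V \<subseteq> span B" "finite B" "card B = dim V"
proof -
  obtain B where B: "B \<subseteq> V" "independent B" "V \<subseteq> span B" "card B = dim V"
    using basis_exists by blast
  moreover have "finite B"
    using independent_span_bound[OF finite_F \<open>independent B\<close>] B(1) assms by blast
  ultimately show ?thesis using that by blast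
qed

lemma dim_subset_span_finite:
  assumes "T \<subseteq> span F" "S \<subseteq> T"
  shows "dim S \<le> dim T"
proof -
  obtain B where "T \<subseteq> span B" "finite B" "card B = dim T"
    using finite_basis_exists[OF assms(1)] by blast
  then show ?thesis using dim_le_card[of S B] assms(2) by auto
qed

text \<open>A basis \<open>C\<close> of \<open>S\<close> through a basis \<open>B\<close> of \<open>S \<inter> T\<close> is
  extended by vectors of \<open>T\<close> to a basis \<open>E\<close> of \<open>S + T\<close>; then \<open>B \<union> (E - C)\<close> is a basis of \<open>T\<close>.\<close>

lemma dim_span_Un_Int:
  assumes "subspace S" "subspace T" "S \<subseteq> span F" "T \<subseteq> span F"
  shows "dim (span (S \<union> T)) + dim (S \<inter> T) = dim S + dim T"
proof -
  obtain B where B: "B \<subseteq> S \<inter> T" "independent B" "S \<inter> T \<subseteq> span B" "card B = dim (S \<inter> T)"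
    using basis_exists by blast
  obtain C where C: "B \<subseteq> C" "C \<subseteq> S" "independent C" "S \<subseteq> span C"
    using maximal_independent_subset_extend[of B S] B by blast
  obtain E where E: "C \<subseteq> E" "E \<subseteq> C \<union> T" "independent E" "C \<union> T \<subseteq> span E"
    using maximal_independent_subset_extend[of C "C \<union> T"] C by blast
  have "finite E"
    using independent_span_bound[OF finite_F \<open>independent E\<close>] E(2) C(2) assms(3,4) by blast
  have dim_S: "dim S = card C"
    using basis_card_eq_dim C by simp
  have "S \<union> T \<subseteq> span E"
    using C(4) E(4) span_mono[OF E(1)] by blast
  then have "span (S \<union> T) \<subseteq> span E"
    by (simp add: span_minimal)
  then have dim_ST: "dim (span (S \<union> T)) = card E"
  proof (intro basis_card_eq_dim[symmetric] \<open>independent E\<close>)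
    show "E \<subseteq> span (S \<union> T)"
      using E(2) C(2) span_superset[of "S \<union> T"] by blast
  qed
  have "T \<subseteq> span (B \<union> (E - C))"
  proof
    fix t assume "t \<in> T"
    moreover have "C \<union> (E - C) = E"
      using E(1) by blast
    ultimately have "t \<in> span (C \<union> (E - C))"
      using E(4) by auto
    then obtain c d where t: "t = c + d" "c \<in> span C" "d \<in> span (E - C)"
      unfolding span_Un by blast
    have "d \<in> T"
      using E(2) span_minimal[of "E - C" T] assms(2) t(3) by blast
    moreover have "c \<in> S"
      using span_minimal[OF C(2) assms(1)] t(2) by blast
    ultimately have "c \<in> span B"
      using B(3) t(1) \<open>t \<in> T\<close> subspace_diff[OF assms(2) \<open>t \<in> T\<close> \<open>d \<in> T\<close>] by auto
    then show "t \<in> span (B \<union> (E - C))"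
      using t span_mono[of B "B \<union> (E - C)"] span_mono[of "E - C" "B \<union> (E - C)"]
      by (auto intro: span_add)
  qed
  then have "dim T = card (B \<union> (E - C))"
    using B(1) E(2) independent_mono[OF E(3), of "B \<union> (E - C)"] C(1) E(1)
    by (intro basis_card_eq_dim[symmetric]) auto
  moreover have "card (B \<union> (E - C)) = card B + card (E - C)"
    using C(1) \<open>finite E\<close> finite_subset[OF _ \<open>finite E\<close>, of B] E(1)
    by (intro card_Un_disjoint) auto
  moreover have "card E = card C + card (E - C)"
    using E(1) \<open>finite E\<close> card_Diff_subset[of C E] card_mono[of E C] finite_subset[of C E]
    by (metis card_Un_disjoint Diff_disjoint Un_Diff_cancel Un_absorb1 finite_Diff)
  ultimately show ?thesis
    using dim_S dim_ST B(4) by simp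
qed

lemma dim_span_Un_le:
  assumes "subspace S" "subspace T" "S \<subseteq> span F" "T \<subseteq> span F" "R \<subseteq> S \<inter> T"
  shows "dim (span (S \<union> T)) + dim R \<le> dim S + dim T"
proof -
  have "dim R \<le> dim (S \<inter> T)"
    using dim_subset_span_finite[of "S \<inter> T" R] assms(3,5) by blast
  then show ?thesis
    using dim_span_Un_Int[OF assms(1-4)] by linarith
qed

lemma dim_Int_add_dim_Int_le:
  assumes "subspace U" "subspace S" "subspace T" "U \<subseteq> span F"
  shows "dim (U \<inter> S) + dim (U \<inter> T) \<le> dim U + dim (U \<inter> (S \<inter> T))"
proof -
  have "span (U \<inter> S \<union> U \<inter> T) \<subseteq> U"
    using assms(1) by (intro span_minimal) auto
  then have "dim (span (U \<inter> S \<union> U \<inter> T)) \<le> dim U"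
    using dim_subset_span_finite assms(4) by blast
  moreover have "dim (span (U \<inter> S \<union> U \<inter> T)) + dim ((U \<inter> S) \<inter> (U \<inter> T))
      = dim (U \<inter> S) + dim (U \<inter> T)"
    using assms by (intro dim_span_Un_Int) (auto intro: subspace_inter)
  moreover have "(U \<inter> S) \<inter> (U \<inter> T) = U \<inter> (S \<inter> T)"
    by blast
  ultimately show ?thesis
    by simp
qed

lemma dim_Int_span_Un:
  assumes "subspace S" "subspace T" "subspace Y"
    and "S \<subseteq> span F" "T \<subseteq> span F" "Y \<subseteq> span F"
  defines "U \<equiv> Y \<inter> span (S \<union> T)"
  shows "dim (S \<inter> span (Y \<union> T)) + dim (U \<inter> T) = dim (S \<inter> T) + dim U"
proof -
  have span_F: "span (S \<union> T) \<subseteq> span F" "span (Y \<union> T) \<subseteq> span F"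
    using assms(4-6) by (simp_all add: span_minimal)
  have "span (S \<union> span (Y \<union> T)) = span (Y \<union> span (S \<union> T))"
    by (simp add: span_Un_span_right Un_left_commute)
  then have "dim (span (Y \<union> span (S \<union> T))) + dim (S \<inter> span (Y \<union> T))
      = dim S + dim (span (Y \<union> T))"
    using dim_span_Un_Int[of S "span (Y \<union> T)"] assms span_F by simp
  moreover have "dim (span (Y \<union> span (S \<union> T))) + dim U = dim Y + dim (span (S \<union> T))"
    unfolding U_def using dim_span_Un_Int assms span_F by simp
  moreover have "dim (span (Y \<union> T)) + dim (Y \<inter> T) = dim Y + dim T"
    using dim_span_Un_Int assms by simp
  moreover have "dim (span (S \<union> T)) + dim (S \<inter> T) = dim S + dim T"
    using dim_span_Un_Int assms by simp
  moreover have "U \<inter> T = Y \<inter> T"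
    unfolding U_def using span_superset[of "S \<union> T"] by blast
  then have "dim (U \<inter> T) = dim (Y \<inter> T)"
    by simp
  ultimately show ?thesis
    by linarith
qed

lemma dim_Int_span_Un_choice:
  assumes "subspace S" "subspace T" "subspace Y"
    and "S \<subseteq> span F" "T \<subseteq> span F" "Y \<subseteq> span F"
  defines "U \<equiv> Y \<inter> span (S \<union> T)"
  shows "dim U + 2 * dim (S \<inter> T) \<le> 2 * dim (S \<inter> span (Y \<union> T)) + dim (U \<inter> (S \<inter> T))
    \<or> dim U + 2 * dim (S \<inter> T) \<le> 2 * dim (span (Y \<union> S) \<inter> T) + dim (U \<inter> (S \<inter> T))"
proof -
  have "dim (S \<inter> span (Y \<union> T)) + dim (U \<inter> T) = dim (S \<inter> T) + dim U"
    using dim_Int_span_Un[OF assms(1-6), folded U_def] .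
  moreover have "dim (span (Y \<union> S) \<inter> T) + dim (U \<inter> S) = dim (S \<inter> T) + dim U"
    using dim_Int_span_Un[of T S Y] assms by (simp add: U_def Un_commute Int_commute)
  moreover have "dim (U \<inter> S) + dim (U \<inter> T) \<le> dim U + dim (U \<inter> (S \<inter> T))"
    using assms by (intro dim_Int_add_dim_Int_le) (auto intro: subspace_inter)
  ultimately show ?thesis
    by linarith
qed

lemma dim_span_extension_le:
  assumes "subspace A" "subspace U" "subspace W'"
    and "A \<subseteq> span F" "U \<subseteq> span F" "W' \<subseteq> span F"
    and "W \<subseteq> A" "W \<subseteq> W'" "dim A \<le> 3 * dim W"
    and "dim U + 2 * dim W \<le> 2 * dim W' + dim (U \<inter> W)"
  shows "dim (span (A \<union> U \<union> W')) \<le> 3 * dim W'"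
proof -
  have "span (A \<union> U) \<subseteq> span F"
    using assms(4,5) by (intro span_minimal) auto
  moreover have "W \<subseteq> span (A \<union> U) \<inter> W'"
    using assms(7,8) span_superset[of "A \<union> U"] by blast
  ultimately have "dim (span (A \<union> U \<union> W')) + dim W \<le> dim (span (A \<union> U)) + dim W'"
    using dim_span_Un_le[of "span (A \<union> U)" W' W, unfolded span_Un_span_left] assms(3,6) by simp
  moreover have "dim (span (A \<union> U)) + dim (U \<inter> W) \<le> dim A + dim U"
    using dim_span_Un_le[of A U "U \<inter> W"] assms(1,2,4,5,7) by blast
  ultimately show ?thesis
    using assms(9,10) by linarith
qed

lemma sum_codim_Suc_le:
  assumes "\<forall>i\<in>{1..Suc m}. X i \<subseteq> span F" "subspace (X (Suc m))"
    and "A \<subseteq> A'" "X (Suc m) \<inter> subspace_sum scale X {1..m} \<subseteq> A'"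
    and "(\<Sum>i=1..m. dim (X i) - dim (X i \<inter> A)) \<le> dim (subspace_sum scale X {1..m})"
  shows "(\<Sum>i=1..Suc m. dim (X i) - dim (X i \<inter> A')) \<le> dim (subspace_sum scale X {1..Suc m})"
proof -
  define Y where "Y = X (Suc m)"
  define S where "S = subspace_sum scale X {1..m}"
  have "S \<subseteq> span F"
    unfolding S_def using assms(1) by (intro subspace_sum_subset_span) auto
  moreover have "Y \<subseteq> span F"
    unfolding Y_def using assms(1) by simp
  ultimately have "dim (subspace_sum scale X {1..Suc m}) + dim (Y \<inter> S) = dim Y + dim S"
    using dim_span_Un_Int[of Y S] assms(2)
    by (simp add: Y_def S_def atLeastAtMostSuc_conv subspace_sum_insert)
  moreover have "dim (Y \<inter> S) \<le> dim (Y \<inter> A')"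
    using assms(4) \<open>Y \<subseteq> span F\<close> unfolding Y_def S_def
    by (intro dim_subset_span_finite) auto
  moreover have "dim (Y \<inter> S) \<le> dim Y"
    using \<open>Y \<subseteq> span F\<close> by (intro dim_subset_span_finite) auto
  moreover have "dim (X i \<inter> A) \<le> dim (X i \<inter> A')" if "i \<in> {1..m}" for i
    using assms(1,3) that by (intro dim_subset_span_finite[of "X i \<inter> A'"]) auto
  then have "(\<Sum>i=1..m. dim (X i) - dim (X i \<inter> A')) \<le> (\<Sum>i=1..m. dim (X i) - dim (X i \<inter> A))"
    by (intro sum_mono diff_le_mono2)
  ultimately show ?thesis
    using assms(5) unfolding S_def Y_def by simp
qed

lemma split_meet_Suc_choice:
  assumes "I \<subseteq> {1..m}" "subspace (X (Suc m))" "\<forall>i\<in>{1..Suc m}. X i \<subseteq> span F"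
  defines "U \<equiv> X (Suc m) \<inter> subspace_sum scale X {1..m}"
    and "W \<equiv> split_meet scale X {1..m} I"
  obtains I' where "I' \<subseteq> {1..Suc m}" "W \<subseteq> split_meet scale X {1..Suc m} I'"
    "dim U + 2 * dim W \<le> 2 * dim (split_meet scale X {1..Suc m} I') + dim (U \<inter> W)"
proof -
  define SI where "SI = subspace_sum scale X I"
  define SJ where "SJ = subspace_sum scale X ({1..m} - I)"
  have "subspace_sum scale X {1..m} = span (SI \<union> SJ)"
    unfolding SI_def SJ_def subspace_sum_Un[symmetric] using assms(1) by (simp add: Un_absorb1)
  then have "U = X (Suc m) \<inter> span (SI \<union> SJ)"
    unfolding U_def by simp
  moreover have X_F: "X i \<subseteq> span F" if "i \<in> {1..m}" for i
    using assms(3) that by simp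
  then have "SI \<subseteq> span F" "SJ \<subseteq> span F"
    unfolding SI_def SJ_def by (intro subspace_sum_subset_span; use X_F assms(1) in blast)+
  moreover have "X (Suc m) \<subseteq> span F"
    using assms(3) by simp
  ultimately have choice:
    "dim U + 2 * dim W \<le> 2 * dim (SI \<inter> span (X (Suc m) \<union> SJ)) + dim (U \<inter> W)
     \<or> dim U + 2 * dim W \<le> 2 * dim (span (X (Suc m) \<union> SI) \<inter> SJ) + dim (U \<inter> W)"
    using dim_Int_span_Un_choice[of SI SJ "X (Suc m)"] assms(2)
    unfolding W_def split_meet_def SI_def SJ_def by simp
  have W_sub: "W \<subseteq> SI \<inter> span (X (Suc m) \<union> SJ)" "W \<subseteq> span (X (Suc m) \<union> SI) \<inter> SJ"
    unfolding W_def split_meet_def SI_def SJ_def using span_superset by blast+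
  from choice show ?thesis
  proof
    assume "dim U + 2 * dim W \<le> 2 * dim (SI \<inter> span (X (Suc m) \<union> SJ)) + dim (U \<inter> W)"
    then show ?thesis
      using W_sub assms(1) unfolding SI_def SJ_def split_meet_Suc(1)[OF assms(1), symmetric]
      by (intro that[of I]) auto
  next
    assume "dim U + 2 * dim W \<le> 2 * dim (span (X (Suc m) \<union> SI) \<inter> SJ) + dim (U \<inter> W)"
    then show ?thesis
      using W_sub assms(1) unfolding SI_def SJ_def split_meet_Suc(2)[OF assms(1), symmetric]
      by (intro that[of "insert (Suc m) I"]) auto
  qed
qed

lemma balanced_cover_Suc:
  assumes "balanced_cover scale X m I A"
    and "subspace (X (Suc m))" "\<forall>i\<in>{1..Suc m}. X i \<subseteq> span F"
  obtains I' A' where "balanced_cover scale X (Suc m) I' A'"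
proof -
  define S where "S = subspace_sum scale X {1..m}"
  define U where "U = X (Suc m) \<inter> S"
  define W where "W = split_meet scale X {1..m} I"
  have I: "I \<subseteq> {1..m}" and A: "subspace A" "A \<subseteq> S" "W \<subseteq> A" "dim A \<le> 3 * dim W"
    and sum_A: "(\<Sum>i=1..m. dim (X i) - dim (X i \<inter> A)) \<le> dim S"
    using assms(1) unfolding balanced_cover_def S_def W_def by auto
  obtain I' where I': "I' \<subseteq> {1..Suc m}" "W \<subseteq> split_meet scale X {1..Suc m} I'"
    and gain: "dim U + 2 * dim W \<le> 2 * dim (split_meet scale X {1..Suc m} I') + dim (U \<inter> W)"
    using split_meet_Suc_choice[OF I assms(2,3)] unfolding U_def S_def W_def by blast
  define W' where "W' = split_meet scale X {1..Suc m} I'"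
  define A' where "A' = span (A \<union> U \<union> W')"
  have S_sub: "S \<subseteq> subspace_sum scale X {1..Suc m}"
    unfolding S_def by (rule subspace_sum_mono) auto
  moreover have "X (Suc m) \<subseteq> subspace_sum scale X {1..Suc m}"
    by (rule subspace_sum_upper) simp
  moreover have W'_sub: "W' \<subseteq> subspace_sum scale X {1..Suc m}"
    unfolding W'_def split_meet_def using subspace_sum_mono[OF I'(1)] by blast
  ultimately have A'_sub: "A' \<subseteq> subspace_sum scale X {1..Suc m}"
    unfolding A'_def U_def using A(2) by (intro span_minimal) auto
  have S'_F: "subspace_sum scale X {1..Suc m} \<subseteq> span F"
    using assms(3) by (intro subspace_sum_subset_span) auto
  with A(2) S_sub have "A \<subseteq> span F"
    by blast
  moreover have "subspace U" "U \<subseteq> span F"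
    unfolding U_def S_def using assms(2,3) by (auto intro: subspace_inter)
  moreover have "subspace W'" "W' \<subseteq> span F"
    using W'_sub S'_F
    unfolding W'_def split_meet_def by (auto intro: subspace_inter)
  ultimately have "dim A' \<le> 3 * dim W'"
    unfolding A'_def using A I'(2)[folded W'_def] gain[folded W'_def]
    by (intro dim_span_extension_le[where W = W])
  moreover have "(\<Sum>i=1..Suc m. dim (X i) - dim (X i \<inter> A')) \<le> dim (subspace_sum scale X {1..Suc m})"
    using assms(2,3) sum_A unfolding S_def A'_def U_def
    by (intro sum_codim_Suc_le) (auto intro: span_base)
  ultimately have "balanced_cover scale X (Suc m) I' A'"
    unfolding balanced_cover_def W'_def[symmetric] A'_def using I'(1) A'_sub A'_def
    by (auto intro: span_base)
  then show ?thesis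
    using that by blast
qed

lemma balanced_cover_exists:
  assumes "\<forall>i\<in>{1..k}. subspace (X i) \<and> X i \<subseteq> span F"
  shows "\<exists>I A. balanced_cover scale X k I A"
  using assms
proof (induction k)
  case 0
  have "subspace_sum scale X {} = {0}"
    unfolding subspace_sum_def by simp
  then have "balanced_cover scale X 0 {} {0}"
    unfolding balanced_cover_def split_meet_def by (simp add: dim_span_eq_card_independent)
  then show ?case
    by blast
next
  case (Suc m)
  then obtain I A where "balanced_cover scale X m I A"
    by auto
  moreover have "subspace (X (Suc m))" "\<forall>i\<in>{1..Suc m}. X i \<subseteq> span F"
    using Suc.prems by auto
  ultimately obtain I' A' where "balanced_cover scale X (Suc m) I' A'"
    by (rule balanced_cover_Suc)
  then show ?case
    by blast
qed

lemma dim_split_meet_le_lambda_star: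
  assumes "\<forall>i\<in>{1..k}. X i \<subseteq> span F" "I \<subseteq> {1..k}"
  shows "int (dim (split_meet scale X {1..k} I)) \<le> lambda_star scale X k"
proof -
  define f where "f J = int (dim (subspace_sum scale X J)) + int (dim (subspace_sum scale X ({1..k} - J)))
      - int (dim (subspace_sum scale X {1..k}))" for J
  have "span (subspace_sum scale X I \<union> subspace_sum scale X ({1..k} - I)) = subspace_sum scale X {1..k}"
    using assms(2) subspace_sum_Un[of X I "{1..k} - I"] by (simp add: Un_absorb1)
  moreover have "subspace_sum scale X J \<subseteq> span F" if "J \<subseteq> {1..k}" for J
    using assms(1) that by (intro subspace_sum_subset_span) auto
  ultimately have "f I = int (dim (split_meet scale X {1..k} I))"
    using dim_span_Un_Int[of "subspace_sum scale X I" "subspace_sum scale X ({1..k} - I)"] assms(2)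
    unfolding f_def split_meet_def by simp
  moreover have "lambda_star scale X k = Max (f ` Pow {1..k})"
    unfolding lambda_star_def f_def by (simp only: setcompr_eq_image Pow_def)
  moreover have "f I \<le> Max (f ` Pow {1..k})"
    using assms(2) by (intro Max_ge) auto
  ultimately show ?thesis
    by simp
qed

lemma fin_dim_subspaceI:
  assumes "subspace A" "A \<subseteq> span F"
  shows "fin_dim_subspace scale A"
proof -
  obtain B where B: "B \<subseteq> A" "independent B" "A \<subseteq> span B" "finite B" "card B = dim A"
    by (rule finite_basis_exists[OF assms(2)])
  have "span B = A"
    using B(1,3) assms(1) by (rule span_subspace)
  then show ?thesis
    unfolding fin_dim_subspace_def using assms(1) B(4) by blast
qed

end

end

theorem lemma3p1:
  fixes scale :: "'a::field \<Rightarrow> 'b::ab_group_add \<Rightarrow> 'b"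
    and X :: "nat \<Rightarrow> 'b set" and k r :: nat
  assumes "vector_space scale"
    and "\<forall>i\<in>{1..k}. fin_dim_subspace scale (X i)"
    and "lambda_star scale X k \<le> int r"
  shows "\<exists>A. fin_dim_subspace scale A \<and> vector_space.dim scale A \<le> 3 * r \<and>
    (\<Sum>i=1..k. vector_space.dim scale (X i) - vector_space.dim scale (X i \<inter> A))
      \<le> vector_space.dim scale (subspace_sum scale X {1..k})"
proof -
  interpret vector_space scale
    by (rule assms(1))
  obtain F where F: "finite F" "\<forall>i\<in>{1..k}. X i \<subseteq> span F"
    using finite_common_span[of "{1..k}" X] assms(2) by auto
  have "\<forall>i\<in>{1..k}. subspace (X i) \<and> X i \<subseteq> span F"
    using assms(2) F(2) unfolding fin_dim_subspace_def by blast
  then obtain I A where cover: "balanced_cover scale X k I A"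
    using balanced_cover_exists[OF F(1)] by blast
  then have "int (dim (split_meet scale X {1..k} I)) \<le> lambda_star scale X k"
    using dim_split_meet_le_lambda_star[OF F] unfolding balanced_cover_def by blast
  then have "dim A \<le> 3 * r"
    using cover assms(3) unfolding balanced_cover_def by linarith
  moreover have "fin_dim_subspace scale A"
    using cover fin_dim_subspaceI[OF F(1)] subspace_sum_subset_span[of "{1..k}" X F] F(2)
    unfolding balanced_cover_def by blast
  ultimately show ?thesis
    using cover unfolding balanced_cover_def by blast
qed

end
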